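(* Let $X$ be a connected weighted graph. Then the subdivision $S(X)$ is nonsingular (i.e. $A(S(X))$ is invertible) if and only if $X$ is unicyclic and its unique cycle $C_p$, with the weights it inherits from $X$, has nonsingular subdivision $S(C_p)$.
   Context: Graphs are simple, undirected, with nonzero real edge weights; $A(\cdot)$ is the weighted adjacency matrix. The subdivision $S(X)$ of a weighted graph $X$ is obtained by replacing each edge $\{u,v\}$ of weight $\omega$ by a new vertex $w$ and two edges $\{u,w\},\{w,v\}$, each of weight $\omega$. *)

theory Defs
  imports Complex_Main "HOL-Combinatorics.Permutations"
begin

text \<open>A weighted simple graph is given by a finite vertex set V and a symmetric weight
function w with zero diagonal; {u,v} (u,v in V) is an edge iff w u v is nonzero.
The weighted adjacency matrix A is (u,v) \<mapsto> w u v, restricted to V.\<close>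

definition wgraph :: "'a set \<Rightarrow> ('a \<Rightarrow> 'a \<Rightarrow> real) \<Rightarrow> bool" where
  "wgraph V w \<longleftrightarrow> finite V \<and> (\<forall>u\<in>V. \<forall>v\<in>V. w u v = w v u) \<and> (\<forall>v\<in>V. w v v = 0)"

definition edges :: "'a set \<Rightarrow> ('a \<Rightarrow> 'a \<Rightarrow> real) \<Rightarrow> 'a set set" where
  "edges V w = {{u, v} | u v. u \<in> V \<and> v \<in> V \<and> w u v \<noteq> 0}"

definition connected_wg :: "'a set \<Rightarrow> ('a \<Rightarrow> 'a \<Rightarrow> real) \<Rightarrow> bool" where
  "connected_wg V w \<longleftrightarrow> V \<noteq> {} \<and>
     (\<forall>u\<in>V. \<forall>v\<in>V. (u, v) \<in> {(x, y). x \<in> V \<and> y \<in> V \<and> w x y \<noteq> 0}\<^sup>*)"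

definition adj_det :: "'a set \<Rightarrow> ('a \<Rightarrow> 'a \<Rightarrow> real) \<Rightarrow> real" where
  "adj_det V w = (\<Sum>p \<in> {p. p permutes V}. of_int (sign p) * (\<Prod>v\<in>V. w v (p v)))"

definition nonsingular :: "'a set \<Rightarrow> ('a \<Rightarrow> 'a \<Rightarrow> real) \<Rightarrow> bool" where
  "nonsingular V w \<longleftrightarrow> adj_det V w \<noteq> 0"

text \<open>Subdivision: vertices are the old vertices (Inl) and the edges (Inr); the new vertex
for edge e = {u,v} is joined to u and to v, each with weight w u v.\<close>
definition subdiv_verts :: "'a set \<Rightarrow> ('a \<Rightarrow> 'a \<Rightarrow> real) \<Rightarrow> ('a + 'a set) set" where
  "subdiv_verts V w = Inl ` V \<union> Inr ` edges V w"

fun subdiv_wt :: "'a set \<Rightarrow> ('a \<Rightarrow> 'a \<Rightarrow> real) \<Rightarrow> ('a + 'a set) \<Rightarrow> ('a + 'a set) \<Rightarrow> real" where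
  "subdiv_wt V w (Inl u) (Inr e) =
     (if e \<in> edges V w \<and> u \<in> e then (\<Sum>v\<in>e - {u}. w u v) else 0)"
| "subdiv_wt V w (Inr e) (Inl u) =
     (if e \<in> edges V w \<and> u \<in> e then (\<Sum>v\<in>e - {u}. w u v) else 0)"
| "subdiv_wt V w _ _ = 0"

definition subdiv_nonsingular :: "'a set \<Rightarrow> ('a \<Rightarrow> 'a \<Rightarrow> real) \<Rightarrow> bool" where
  "subdiv_nonsingular V w \<longleftrightarrow> nonsingular (subdiv_verts V w) (subdiv_wt V w)"

definition is_cycle :: "'a set \<Rightarrow> ('a \<Rightarrow> 'a \<Rightarrow> real) \<Rightarrow> 'a set set \<Rightarrow> bool" where
  "is_cycle V w C \<longleftrightarrow> (\<exists>vs. length vs \<ge> 3 \<and> distinct vs \<and> set vs \<subseteq> V \<and>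
      (\<forall>i < length vs. w (vs ! i) (vs ! ((i + 1) mod length vs)) \<noteq> 0) \<and>
      C = {{vs ! i, vs ! ((i + 1) mod length vs)} | i. i < length vs})"

definition unicyclic :: "'a set \<Rightarrow> ('a \<Rightarrow> 'a \<Rightarrow> real) \<Rightarrow> bool" where
  "unicyclic V w \<longleftrightarrow> connected_wg V w \<and> (\<exists>!C. is_cycle V w C)"

definition cycle_wt :: "('a \<Rightarrow> 'a \<Rightarrow> real) \<Rightarrow> 'a set set \<Rightarrow> 'a \<Rightarrow> 'a \<Rightarrow> real" where
  "cycle_wt w C u v = (if {u, v} \<in> C then w u v else 0)"

end

theory Submission
  imports Defs
begin

text \<open>In the Leibniz expansion of the determinant of \<open>A(S(X))\<close>, a nonzero term matches the
  old vertices bijectively with the edge vertices, so \<open>S(X)\<close> is singular unless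
  \<open>|E| = |V|\<close>; for connected \<open>X\<close> this is equivalent to being unicyclic, because a connected
  graph has at least \<open>|V| - 1\<close> edges and deleting an edge of a cycle keeps it connected.
  A leaf \<open>u\<close> with neighbour \<open>v\<close> makes \<open>u\<close> and the vertex of the edge \<open>uv\<close> a pendant pair
  of \<open>S(X)\<close>, and expanding along it multiplies the determinant by \<open>-w(u,v)\<^sup>2\<close> and removes
  \<open>u\<close>. Removing leaves one at a time from a connected unicyclic graph keeps it connected and
  unicyclic and ends with a graph of minimum degree 2; as \<open>|E| = |V|\<close>, that graph is
  2-regular, hence equal to its cycle.\<close>

section \<open>Determinants with a pendant pair\<close>

lemma adj_det_cong:
  assumes "\<And>x y. x \<in> S \<Longrightarrow> y \<in> S \<Longrightarrow> f x y = g x y"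
  shows "adj_det S f = adj_det S g"
  unfolding adj_det_def
proof (rule sum.cong[OF refl])
  fix p assume "p \<in> {p. p permutes S}"
  then have "p permutes S" by simp
  then show "of_int (sign p) * (\<Prod>v\<in>S. f v (p v)) = of_int (sign p) * (\<Prod>v\<in>S. g v (p v))"
    using assms permutes_in_image by (metis (no_types, lifting) prod.cong)
qed

lemma permutes_swapping_eq_image:
  assumes "a \<in> S" "b \<in> S"
  shows "{p. p permutes S \<and> p a = b \<and> p b = a} =
    (\<lambda>q. transpose a b \<circ> q) ` {q. q permutes S - {a, b}}"
proof
  show "(\<lambda>q. transpose a b \<circ> q) ` {q. q permutes S - {a, b}} \<subseteq> {p. p permutes S \<and> p a = b \<and> p b = a}"
  proof clarify
    fix q assume q: "q permutes S - {a, b}"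
    then have "q permutes S" by (rule permutes_subset) blast
    moreover have "q a = a" "q b = b" using permutes_not_in[OF q] by auto
    ultimately show "transpose a b \<circ> q permutes S \<and> (transpose a b \<circ> q) a = b \<and> (transpose a b \<circ> q) b = a"
      using permutes_compose permutes_swap_id[OF assms] by auto
  qed
next
  show "{p. p permutes S \<and> p a = b \<and> p b = a} \<subseteq> (\<lambda>q. transpose a b \<circ> q) ` {q. q permutes S - {a, b}}"
  proof
    fix p assume "p \<in> {p. p permutes S \<and> p a = b \<and> p b = a}"
    then have p: "p permutes S" and pab: "p a = b" "p b = a" by auto
    define q where "q = transpose a b \<circ> p"
    have "q permutes S" unfolding q_def by (rule permutes_compose[OF p permutes_swap_id[OF assms]])
    then have "q permutes S - {a, b}"
      by (rule permutes_superset) (auto simp: q_def pab)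
    moreover have "p = transpose a b \<circ> q"
      unfolding q_def by (metis comp_assoc transpose_comp_involutory id_comp)
    ultimately show "p \<in> (\<lambda>q. transpose a b \<circ> q) ` {q. q permutes S - {a, b}}" by blast
  qed
qed

lemma prod_permutes_eq_0_unless_swapping:
  fixes f :: "'a \<Rightarrow> 'a \<Rightarrow> 'b::comm_semiring_1"
  assumes "finite S" "a \<in> S" and p: "p permutes S" and "\<not> (p a = b \<and> p b = a)"
    and col: "\<And>x. x \<in> S \<Longrightarrow> f x a \<noteq> 0 \<Longrightarrow> x = b"
    and row: "\<And>y. y \<in> S \<Longrightarrow> f a y \<noteq> 0 \<Longrightarrow> y = b"
  shows "(\<Prod>v\<in>S. f v (p v)) = 0"
proof (cases "p a = b")
  case False
  then have "f a (p a) = 0" using row permutes_in_image[OF p] \<open>a \<in> S\<close> by blast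
  then show ?thesis using prod_zero[OF assms(1), of "\<lambda>v. f v (p v)"] assms(2) by blast
next
  case True
  obtain x where x: "p x = a" using permutes_surj[OF p] by (metis surjD)
  have "x \<in> S" using x \<open>a \<in> S\<close> permutes_in_image[OF p] by metis
  moreover have "x \<noteq> b" using x True assms(4) by auto
  ultimately have "f x (p x) = 0" using col x by auto
  then show ?thesis using prod_zero[OF assms(1), of "\<lambda>v. f v (p v)"] \<open>x \<in> S\<close> by blast
qed

lemma leibniz_term_swap_compose:
  fixes f :: "'a \<Rightarrow> 'a \<Rightarrow> real"
  assumes fin: "finite S" and ab: "a \<in> S" "b \<in> S" "a \<noteq> b" and q: "q permutes S - {a, b}"
  shows "of_int (sign (transpose a b \<circ> q)) * (\<Prod>v\<in>S. f v ((transpose a b \<circ> q) v)) =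
    - (f a b * f b a) * (of_int (sign q) * (\<Prod>v\<in>S - {a, b}. f v (q v)))"
proof -
  have "permutation q" using permutes_imp_permutation[OF _ q] fin by simp
  then have "sign (transpose a b \<circ> q) = sign (transpose a b) * sign q"
    by (rule sign_compose[OF permutation_swap_id])
  then have sign: "sign (transpose a b \<circ> q) = - sign q" using ab(3) by (simp add: sign_swap_id)
  have split: "(\<Prod>v\<in>S. h v) = h a * (h b * (\<Prod>v\<in>S - {a, b}. h v))" for h :: "'a \<Rightarrow> real"
  proof -
    have "(\<Prod>v\<in>S. h v) = h a * (\<Prod>v\<in>S - {a}. h v)" by (rule prod.remove[OF fin ab(1)])
    also have "(\<Prod>v\<in>S - {a}. h v) = h b * (\<Prod>v\<in>S - {a} - {b}. h v)"
      using fin ab by (intro prod.remove) auto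
    finally show ?thesis by (simp only: Diff_insert2[of S a "{b}"])
  qed
  have "q v \<in> S - {a, b}" if "v \<in> S - {a, b}" for v
    using permutes_in_image[OF q] that by blast
  then have "(\<Prod>v\<in>S - {a, b}. f v ((transpose a b \<circ> q) v)) = (\<Prod>v\<in>S - {a, b}. f v (q v))"
    by (intro prod.cong) auto
  moreover have "q a = a" "q b = b" using permutes_not_in[OF q] by auto
  ultimately have "(\<Prod>v\<in>S. f v ((transpose a b \<circ> q) v)) = f a b * (f b a * (\<Prod>v\<in>S - {a, b}. f v (q v)))"
    using split[of "\<lambda>v. f v ((transpose a b \<circ> q) v)"] by simp
  then show ?thesis by (simp add: sign)
qed

lemma adj_det_pendant:
  assumes fin: "finite S" and ab: "a \<in> S" "b \<in> S" "a \<noteq> b"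
    and col: "\<And>x. x \<in> S \<Longrightarrow> f x a \<noteq> 0 \<Longrightarrow> x = b"
    and row: "\<And>y. y \<in> S \<Longrightarrow> f a y \<noteq> 0 \<Longrightarrow> y = b"
  shows "adj_det S f = - (f a b * f b a) * adj_det (S - {a, b}) f"
proof -
  let ?term = "\<lambda>p. of_int (sign p) * (\<Prod>v\<in>S. f v (p v))"
  let ?swap = "\<lambda>q. transpose a b \<circ> q"
  define T where "T = {p. p permutes S \<and> p a = b \<and> p b = a}"
  define Q where "Q = {q. q permutes S - {a, b}}"
  have "adj_det S f = (\<Sum>p\<in>{p. p permutes S}. ?term p)" by (simp add: adj_det_def)
  also have "\<dots> = (\<Sum>p\<in>T. ?term p)"
  proof (rule sum.mono_neutral_right)
    show "finite {p. p permutes S}" using finite_permutations[OF fin] .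
    show "T \<subseteq> {p. p permutes S}" by (auto simp: T_def)
    show "\<forall>p\<in>{p. p permutes S} - T. ?term p = 0"
      using prod_permutes_eq_0_unless_swapping[OF fin ab(1) _ _ col row] by (auto simp: T_def)
  qed
  also have "\<dots> = (\<Sum>q\<in>Q. ?term (?swap q))"
  proof -
    have "inj_on ?swap Q"
      unfolding inj_on_def by (metis comp_assoc transpose_comp_involutory id_comp)
    moreover have "T = ?swap ` Q"
      unfolding T_def Q_def by (rule permutes_swapping_eq_image[OF ab(1,2)])
    ultimately show ?thesis using sum.reindex[of ?swap Q ?term] by (simp add: comp_def)
  qed
  also have "\<dots> = (\<Sum>q\<in>Q. - (f a b * f b a) * (of_int (sign q) * (\<Prod>v\<in>S - {a, b}. f v (q v))))"
  proof (rule sum.cong[OF refl])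
    fix q assume "q \<in> Q"
    then show "?term (?swap q) = - (f a b * f b a) * (of_int (sign q) * (\<Prod>v\<in>S - {a, b}. f v (q v)))"
      by (intro leibniz_term_swap_compose[OF fin ab]) (simp add: Q_def)
  qed
  also have "\<dots> = - (f a b * f b a) * adj_det (S - {a, b}) f"
    unfolding adj_det_def Q_def by (simp add: sum_distrib_left)
  finally show ?thesis .
qed

section \<open>Edges and degrees\<close>

lemma finite_edges: "finite V \<Longrightarrow> finite (edges V w)"
proof -
  assume "finite V"
  moreover have "edges V w \<subseteq> (\<lambda>(u, v). {u, v}) ` (V \<times> V)" unfolding edges_def by auto
  ultimately show ?thesis by (meson finite_SigmaI finite_imageI finite_subset)
qed

lemma edgesI: "x \<in> V \<Longrightarrow> y \<in> V \<Longrightarrow> w x y \<noteq> 0 \<Longrightarrow> {x, y} \<in> edges V w"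
  unfolding edges_def by auto

lemma edges_subset: "e \<in> edges V w \<Longrightarrow> e \<subseteq> V"
  unfolding edges_def by auto

lemma wgraph_sym: "wgraph V w \<Longrightarrow> x \<in> V \<Longrightarrow> y \<in> V \<Longrightarrow> w x y = w y x"
  unfolding wgraph_def by blast

lemma wgraph_finite: "wgraph V w \<Longrightarrow> finite V"
  unfolding wgraph_def by blast

lemma wgraph_diag: "wgraph V w \<Longrightarrow> x \<in> V \<Longrightarrow> w x x = 0"
  unfolding wgraph_def by blast

lemma wgraph_subset: "wgraph V w \<Longrightarrow> V' \<subseteq> V \<Longrightarrow> wgraph V' w"
  unfolding wgraph_def by (meson finite_subset subset_iff)

lemma edge_other_endpoint:
  assumes "wgraph V w" "e \<in> edges V w" "x \<in> e"
  obtains y where "y \<in> V" "y \<noteq> x" "e = {x, y}" "w x y \<noteq> 0"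
proof -
  obtain a b where e: "e = {a, b}" "a \<in> V" "b \<in> V" "w a b \<noteq> 0"
    using assms(2) unfolding edges_def by auto
  moreover have "a \<noteq> b" using wgraph_diag[OF assms(1) e(2)] e(4) by auto
  moreover have "w b a \<noteq> 0" using e wgraph_sym[OF assms(1)] by metis
  ultimately show ?thesis using that assms(3) by (auto simp: insert_commute)
qed

lemma card_edge:
  assumes "wgraph V w" "e \<in> edges V w"
  shows "card e = 2"
proof -
  obtain a b where "e = {a, b}" "a \<in> V" "w a b \<noteq> 0"
    using assms(2) unfolding edges_def by auto
  moreover have "a \<noteq> b" using wgraph_diag[OF assms(1)] calculation by auto
  ultimately show ?thesis by simp
qed

definition incident_edges :: "'a set \<Rightarrow> ('a \<Rightarrow> 'a \<Rightarrow> real) \<Rightarrow> 'a \<Rightarrow> 'a set set" where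
  "incident_edges V w v = {e \<in> edges V w. v \<in> e}"

definition degree :: "'a set \<Rightarrow> ('a \<Rightarrow> 'a \<Rightarrow> real) \<Rightarrow> 'a \<Rightarrow> nat" where
  "degree V w v = card (incident_edges V w v)"

lemma finite_incident_edges: "finite V \<Longrightarrow> finite (incident_edges V w v)"
  unfolding incident_edges_def by (rule finite_subset[OF _ finite_edges]) auto

lemma edges_Diff_vertex: "edges (V - {u}) w = edges V w - incident_edges V w u"
proof -
  have "edges (V - {u}) w = {e \<in> edges V w. u \<notin> e}" unfolding edges_def by blast
  then show ?thesis unfolding incident_edges_def by blast
qed

lemma card_edges_Diff_vertex:
  assumes "finite V"
  shows "card (edges (V - {u}) w) = card (edges V w) - degree V w u"
proof -
  have "incident_edges V w u \<subseteq> edges V w" by (auto simp: incident_edges_def)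
  moreover have "finite (incident_edges V w u)"
    using calculation finite_edges[OF assms] by (rule finite_subset)
  ultimately show ?thesis unfolding edges_Diff_vertex degree_def by (rule card_Diff_subset[rotated])
qed

lemma sum_degree:
  assumes g: "wgraph V w"
  shows "(\<Sum>v\<in>V. degree V w v) = 2 * card (edges V w)"
proof -
  have finV: "finite V" using wgraph_finite[OF g] .
  have finE: "finite (edges V w)" using finite_edges[OF finV] .
  have "degree V w v = (\<Sum>e\<in>edges V w. if v \<in> e then 1 else 0)" for v
    unfolding degree_def incident_edges_def using sum.inter_filter[OF finE, of "\<lambda>_. 1::nat"] by simp
  then have "(\<Sum>v\<in>V. degree V w v) = (\<Sum>v\<in>V. \<Sum>e\<in>edges V w. if v \<in> e then 1 else 0)"
    by simp
  also have "\<dots> = (\<Sum>e\<in>edges V w. \<Sum>v\<in>V. if v \<in> e then 1 else 0)" by (rule sum.swap)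
  also have "\<dots> = (\<Sum>e\<in>edges V w. card e)"
  proof (rule sum.cong[OF refl])
    fix e assume "e \<in> edges V w"
    then have "{v \<in> V. v \<in> e} = e" using edges_subset by blast
    then show "(\<Sum>v\<in>V. if v \<in> e then 1 else 0) = card e"
      using sum.inter_filter[OF finV, of "\<lambda>_. 1::nat" "\<lambda>v. v \<in> e"] by simp
  qed
  also have "\<dots> = 2 * card (edges V w)" using card_edge[OF g] by simp
  finally show ?thesis .
qed

section \<open>The determinant of the subdivision\<close>

abbreviation subdiv_det :: "'a set \<Rightarrow> ('a \<Rightarrow> 'a \<Rightarrow> real) \<Rightarrow> real" where
  "subdiv_det V w \<equiv> adj_det (subdiv_verts V w) (subdiv_wt V w)"

lemma subdiv_nonsingular_iff: "subdiv_nonsingular V w \<longleftrightarrow> subdiv_det V w \<noteq> 0"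
  unfolding subdiv_nonsingular_def nonsingular_def ..

lemma finite_subdiv_verts: "finite V \<Longrightarrow> finite (subdiv_verts V w)"
  unfolding subdiv_verts_def using finite_edges by auto

lemma subdiv_wt_nonzeroE:
  assumes "subdiv_wt V w x y \<noteq> 0"
  obtains u e where "e \<in> edges V w" "u \<in> e" "x = Inl u" "y = Inr e"
    | u e where "e \<in> edges V w" "u \<in> e" "x = Inr e" "y = Inl u"
  using assms by (cases x; cases y) (auto split: if_splits)

lemma subdiv_det_eq_0_if_card_edges_ne:
  assumes g: "wgraph V w" and ne: "card (edges V w) \<noteq> card V"
  shows "subdiv_det V w = 0"
  unfolding adj_det_def
proof (rule sum.neutral, rule ballI)
  let ?S = "subdiv_verts V w" and ?E = "edges V w"
  have finV: "finite V" using wgraph_finite[OF g] .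
  fix p assume "p \<in> {p. p permutes ?S}"
  then have p: "p permutes ?S" by simp
  have "(\<Prod>v\<in>?S. subdiv_wt V w v (p v)) = 0"
  proof (rule ccontr)
    assume "(\<Prod>v\<in>?S. subdiv_wt V w v (p v)) \<noteq> 0"
    then have nz: "subdiv_wt V w x (p x) \<noteq> 0" if "x \<in> ?S" for x
      using that finite_subdiv_verts[OF finV] by auto
    have inj: "inj_on p X" for X using permutes_inj[OF p] by (simp add: inj_on_def inj_def)
    have "p ` Inl ` V \<subseteq> Inr ` ?E"
    proof clarify
      fix x assume "x \<in> V"
      then have "Inl x \<in> ?S" unfolding subdiv_verts_def by auto
      then show "p (Inl x) \<in> Inr ` ?E" by (rule subdiv_wt_nonzeroE[OF nz]) auto
    qed
    then have "card (Inl ` V :: ('a + 'a set) set) \<le> card (Inr ` ?E :: ('a + 'a set) set)"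
      by (intro card_inj_on_le[OF inj]) (simp_all add: finite_edges[OF finV])
    moreover have "p ` Inr ` ?E \<subseteq> Inl ` V"
    proof clarify
      fix e assume "e \<in> ?E"
      then have "Inr e \<in> ?S" unfolding subdiv_verts_def by auto
      then show "p (Inr e) \<in> Inl ` V"
        by (rule subdiv_wt_nonzeroE[OF nz]) (auto dest: edges_subset)
    qed
    then have "card (Inr ` ?E :: ('a + 'a set) set) \<le> card (Inl ` V :: ('a + 'a set) set)"
      by (intro card_inj_on_le[OF inj]) (simp_all add: finV)
    ultimately show False using ne by (simp add: card_image)
  qed
  then show "of_int (sign p) * (\<Prod>v\<in>?S. subdiv_wt V w v (p v)) = 0" by simp
qed

lemma subdiv_det_remove_leaf:
  assumes g: "wgraph V w" and u: "u \<in> V" and v: "v \<in> V" and uv: "w u v \<noteq> 0"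
    and leaf: "incident_edges V w u = {{u, v}}"
  shows "subdiv_det V w = - (w u v)\<^sup>2 * subdiv_det (V - {u}) w"
proof -
  let ?S = "subdiv_verts V w" and ?a = "Inl u" and ?b = "Inr {u, v}"
  have finV: "finite V" using wgraph_finite[OF g] .
  have "u \<noteq> v" using wgraph_diag[OF g u] uv by auto
  have uvE: "{u, v} \<in> edges V w" using edgesI u v uv by metis
  have ab: "?a \<in> ?S" "?b \<in> ?S" using u uvE unfolding subdiv_verts_def by auto
  have only_b: "z = ?b" if "subdiv_wt V w x y \<noteq> 0" "x = ?a \<and> y = z \<or> x = z \<and> y = ?a" for x y z
    using that leaf by (elim subdiv_wt_nonzeroE) (auto simp: incident_edges_def)
  have edges_V': "edges (V - {u}) w = edges V w - {{u, v}}"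
    using edges_Diff_vertex leaf by metis
  have S': "?S - {?a, ?b} = subdiv_verts (V - {u}) w"
    unfolding subdiv_verts_def edges_V' by auto
  have "subdiv_det V w = - (w u v)\<^sup>2 * adj_det (subdiv_verts (V - {u}) w) (subdiv_wt V w)"
    using adj_det_pendant[OF finite_subdiv_verts[OF finV] ab] only_b uvE \<open>u \<noteq> v\<close>
    by (simp add: S' power2_eq_square)
  also have "adj_det (subdiv_verts (V - {u}) w) (subdiv_wt V w) = subdiv_det (V - {u}) w"
  proof (rule adj_det_cong)
    fix x y assume "x \<in> subdiv_verts (V - {u}) w" "y \<in> subdiv_verts (V - {u}) w"
    then show "subdiv_wt V w x y = subdiv_wt (V - {u}) w x y"
      unfolding subdiv_verts_def by (cases x; cases y) (auto simp: edges_V')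
  qed
  finally show ?thesis .
qed

section \<open>Connectivity and leaves\<close>

definition adj_rel :: "'a set \<Rightarrow> ('a \<Rightarrow> 'a \<Rightarrow> real) \<Rightarrow> ('a \<times> 'a) set" where
  "adj_rel V w = {(x, y). x \<in> V \<and> y \<in> V \<and> w x y \<noteq> 0}"

lemma adj_relD: "(x, y) \<in> adj_rel V w \<Longrightarrow> x \<in> V \<and> y \<in> V \<and> w x y \<noteq> 0"
  unfolding adj_rel_def by simp

lemma connected_wg_iff:
  "connected_wg V w \<longleftrightarrow> V \<noteq> {} \<and> (\<forall>u\<in>V. \<forall>v\<in>V. (u, v) \<in> (adj_rel V w)\<^sup>*)"
  unfolding connected_wg_def adj_rel_def ..

lemma sym_adj_rel: "wgraph V w \<Longrightarrow> sym (adj_rel V w)"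
  unfolding sym_def adj_rel_def wgraph_def by auto

lemma neighbour_of_leaf:
  assumes g: "wgraph V w" and "u \<in> V" "y \<in> V" "w u y \<noteq> 0"
    and leaf: "incident_edges V w u = {{u, v}}"
  shows "y = v"
proof -
  have "{u, y} \<in> edges V w" using assms(2,3,4) by (rule edgesI)
  then have "{u, y} \<in> incident_edges V w u" by (simp add: incident_edges_def)
  then have "{u, y} = {u, v}" using leaf by simp
  moreover have "y \<noteq> u" using wgraph_diag[OF g \<open>u \<in> V\<close>] assms(4) by auto
  ultimately show ?thesis by (auto simp: doubleton_eq_iff)
qed

lemma rtrancl_adj_rel_remove_leaf:
  assumes g: "wgraph V w" and u: "u \<in> V" and v: "v \<in> V"
    and uv: "w u v \<noteq> 0" and leaf: "incident_edges V w u = {{u, v}}"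
    and a: "a \<in> V - {u}" and walk: "(a, z) \<in> (adj_rel V w)\<^sup>*"
  shows "(a, if z = u then v else z) \<in> (adj_rel (V - {u}) w)\<^sup>*"
  using walk
proof (induction rule: rtrancl_induct)
  case base
  then show ?case using a by simp
next
  case (step y z)
  let ?R = "adj_rel V w" and ?R' = "adj_rel (V - {u}) w"
  have "u \<noteq> v" using wgraph_diag[OF g u] uv by auto
  have only_v: "x = v" if "(u, x) \<in> ?R \<or> (x, u) \<in> ?R" for x
  proof -
    have "x \<in> V" "w u x \<noteq> 0" using that wgraph_sym[OF g _ u] by (auto dest: adj_relD)
    then show ?thesis by (rule neighbour_of_leaf[OF g u _ _ leaf])
  qed
  show ?case
  proof (cases "y = u")
    case True
    then show ?thesis using step only_v \<open>u \<noteq> v\<close> by auto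
  next
    case False
    then have ay: "(a, y) \<in> ?R'\<^sup>*" using step.IH by simp
    show ?thesis
    proof (cases "z = u")
      case True
      then show ?thesis using ay only_v step.hyps(2) by auto
    next
      case False
      then have "(y, z) \<in> ?R'" using step.hyps(2) \<open>y \<noteq> u\<close> by (auto simp: adj_rel_def)
      then show ?thesis using ay False by (simp add: rtrancl_into_rtrancl)
    qed
  qed
qed

lemma connected_remove_leaf:
  assumes g: "wgraph V w" and conn: "connected_wg V w" and u: "u \<in> V" and v: "v \<in> V"
    and uv: "w u v \<noteq> 0" and leaf: "incident_edges V w u = {{u, v}}"
  shows "connected_wg (V - {u}) w"
  unfolding connected_wg_iff
proof (intro conjI ballI)
  show "V - {u} \<noteq> {}" using v wgraph_diag[OF g u] uv by auto
next
  fix a b assume a: "a \<in> V - {u}" and b: "b \<in> V - {u}"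
  then have "(a, b) \<in> (adj_rel V w)\<^sup>*" using conn unfolding connected_wg_iff by blast
  from rtrancl_adj_rel_remove_leaf[OF g u v uv leaf a this]
  show "(a, b) \<in> (adj_rel (V - {u}) w)\<^sup>*" using b by simp
qed

lemma connected_degree_le_1_leaf:
  assumes g: "wgraph V w" and conn: "connected_wg V w" and u: "u \<in> V"
    and x: "x \<in> V" "x \<noteq> u" and deg: "degree V w u \<le> 1"
  obtains v where "v \<in> V" "w u v \<noteq> 0" "incident_edges V w u = {{u, v}}"
proof -
  have "(u, x) \<in> (adj_rel V w)\<^sup>*" using conn u x unfolding connected_wg_iff by blast
  then obtain v where "(u, v) \<in> adj_rel V w" using x(2) by (metis converse_rtranclE)
  then have v: "v \<in> V" "w u v \<noteq> 0" by (simp_all add: adj_rel_def)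
  have "{u, v} \<in> edges V w" using u v by (rule edgesI)
  then have uv: "{u, v} \<in> incident_edges V w u" by (simp add: incident_edges_def)
  have "finite (incident_edges V w u)"
    using finite_incident_edges[OF wgraph_finite[OF g]] .
  moreover have "card (incident_edges V w u) \<le> Suc 0" using deg by (simp add: degree_def)
  ultimately have "\<forall>a\<in>incident_edges V w u. \<forall>b\<in>incident_edges V w u. a = b"
    using card_le_Suc0_iff_eq by blast
  then have "incident_edges V w u = {{u, v}}" using uv by auto
  then show ?thesis using that v by blast
qed

section \<open>Cycles\<close>

definition cycle_list :: "'a set \<Rightarrow> ('a \<Rightarrow> 'a \<Rightarrow> real) \<Rightarrow> 'a list \<Rightarrow> bool" where
  "cycle_list V w vs \<longleftrightarrow> length vs \<ge> 3 \<and> distinct vs \<and> set vs \<subseteq> V \<and>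
      (\<forall>i < length vs. w (vs ! i) (vs ! ((i + 1) mod length vs)) \<noteq> 0)"

definition cycle_edges :: "'a list \<Rightarrow> 'a set set" where
  "cycle_edges vs = {{vs ! i, vs ! ((i + 1) mod length vs)} | i. i < length vs}"

lemma is_cycle_iff_cycle_list: "is_cycle V w C \<longleftrightarrow> (\<exists>vs. cycle_list V w vs \<and> C = cycle_edges vs)"
  unfolding is_cycle_def cycle_list_def cycle_edges_def by blast

lemma cycle_list_mono: "cycle_list V w vs \<Longrightarrow> V \<subseteq> V' \<Longrightarrow> cycle_list V' w vs"
  unfolding cycle_list_def by blast

lemma cycle_edges_subset:
  assumes "cycle_list V w vs"
  shows "cycle_edges vs \<subseteq> edges V w"
proof
  fix e assume "e \<in> cycle_edges vs"
  then obtain i where i: "i < length vs" "e = {vs ! i, vs ! ((i + 1) mod length vs)}"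
    unfolding cycle_edges_def by blast
  then have "0 < length vs" by linarith
  then have "(i + 1) mod length vs < length vs" by simp
  then show "e \<in> edges V w" using assms i edgesI unfolding cycle_list_def by (metis nth_mem subsetD)
qed

lemma cycle_list_nonempty:
  assumes "cycle_list V w vs"
  shows "vs \<noteq> []"
proof -
  have "3 \<le> length vs" using assms unfolding cycle_list_def by blast
  then show ?thesis by auto
qed

lemma cycle_edges_nonempty:
  assumes "cycle_list V w vs"
  shows "cycle_edges vs \<noteq> {}"
proof -
  have "{vs ! 0, vs ! (1 mod length vs)} \<in> cycle_edges vs"
    unfolding cycle_edges_def using cycle_list_nonempty[OF assms] by (intro CollectI exI[of _ 0]) simp
  then show ?thesis by blast
qed

lemma Union_cycle_edges:
  assumes "vs \<noteq> []"
  shows "\<Union>(cycle_edges vs) = set vs"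
proof
  show "\<Union>(cycle_edges vs) \<subseteq> set vs" using assms by (auto simp: cycle_edges_def)
  show "set vs \<subseteq> \<Union>(cycle_edges vs)"
  proof
    fix x assume "x \<in> set vs"
    then obtain i where "i < length vs" "x = vs ! i" by (auto simp: in_set_conv_nth)
    then show "x \<in> \<Union>(cycle_edges vs)" unfolding cycle_edges_def by blast
  qed
qed

lemma mod_ne_if_between:
  fixes i j p :: nat
  assumes "i < p" "i < j" "j < i + p"
  shows "j mod p \<noteq> i"
proof
  assume "j mod p = i"
  then have "p dvd j - i" using assms mod_eq_dvd_iff_nat[of i j p] by simp
  then show False using assms by (auto dest: dvd_imp_le)
qed

lemma cycle_edge_inj:
  assumes "distinct vs" "3 \<le> length vs" "i < length vs" "j < length vs"
    and "{vs ! i, vs ! ((i + 1) mod length vs)} = {vs ! j, vs ! ((j + 1) mod length vs)}"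
  shows "i = j"
proof -
  let ?p = "length vs"
  have idx: "k = l" if "vs ! k = vs ! l" "k < ?p" "l < ?p" for k l
    using assms(1) nth_eq_iff_index_eq that by blast
  have "0 < ?p" using assms(2) by linarith
  then have succ: "(k + 1) mod ?p < ?p" for k by simp
  from assms(5) consider "vs ! i = vs ! j"
    | "vs ! i = vs ! ((j + 1) mod ?p)" "vs ! ((i + 1) mod ?p) = vs ! j"
    by (auto simp: doubleton_eq_iff)
  then show ?thesis
  proof cases
    case 1
    then show ?thesis using idx assms(3,4) by blast
  next
    case 2
    then have "i = (j + 1) mod ?p" "(i + 1) mod ?p = j" using idx succ assms(3,4) by blast+
    then have "Suc (Suc j) mod ?p = j" by (simp add: mod_Suc_eq)
    moreover have "Suc (Suc j) mod ?p \<noteq> j"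
      using mod_ne_if_between[of j ?p "Suc (Suc j)"] assms(2,4) by simp
    ultimately show ?thesis by blast
  qed
qed

lemma two_cycle_edges_at:
  assumes c: "cycle_list V w vs" and x: "x \<in> set vs"
  obtains c1 c2 where "c1 \<in> cycle_edges vs" "c2 \<in> cycle_edges vs" "c1 \<noteq> c2" "x \<in> c1" "x \<in> c2"
proof -
  let ?p = "length vs"
  have p: "distinct vs" "3 \<le> ?p" using c unfolding cycle_list_def by auto
  then have "0 < ?p" by linarith
  obtain i where i: "i < ?p" "x = vs ! i" using x by (auto simp: in_set_conv_nth)
  define j where "j = (i + ?p - 1) mod ?p"
  have j: "j < ?p" using \<open>0 < ?p\<close> by (simp add: j_def)
  have j_succ: "(j + 1) mod ?p = i"
  proof -
    have "(j + 1) mod ?p = Suc (i + ?p - 1) mod ?p" by (simp add: j_def mod_Suc_eq)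
    also have "Suc (i + ?p - 1) = i + ?p" using p by simp
    finally show ?thesis using i by simp
  qed
  have "j \<noteq> i" using j_succ mod_ne_if_between[of i ?p "Suc i"] i(1) p(2) by auto
  then have "{vs ! i, vs ! ((i + 1) mod ?p)} \<noteq> {vs ! j, vs ! ((j + 1) mod ?p)}"
    using cycle_edge_inj[OF p i(1) j] by metis
  then show ?thesis
    using that i j j_succ unfolding cycle_edges_def by blast
qed

lemma degree_ge_2_on_cycle:
  assumes g: "wgraph V w" and c: "cycle_list V w vs" and x: "x \<in> set vs"
  shows "2 \<le> degree V w x"
proof -
  obtain c1 c2 where cc: "c1 \<in> cycle_edges vs" "c2 \<in> cycle_edges vs" "c1 \<noteq> c2" "x \<in> c1" "x \<in> c2"
    using two_cycle_edges_at[OF c x] .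
  then have "{c1, c2} \<subseteq> incident_edges V w x"
    using cycle_edges_subset[OF c] unfolding incident_edges_def by blast
  moreover have "finite (incident_edges V w x)"
    using finite_incident_edges[OF wgraph_finite[OF g]] .
  ultimately have "card {c1, c2} \<le> degree V w x" unfolding degree_def by (rule card_mono[rotated])
  then show ?thesis using cc(3) by simp
qed

lemma rtrancl_chain:
  assumes "m \<le> k" and "\<And>j. m \<le> j \<Longrightarrow> j < k \<Longrightarrow> (f j, f (Suc j)) \<in> R"
  shows "(f m, f k) \<in> R\<^sup>*"
  using assms by (induction rule: dec_induct) (auto intro: rtrancl_into_rtrancl)

definition del_edge :: "('a \<Rightarrow> 'a \<Rightarrow> real) \<Rightarrow> 'a set \<Rightarrow> 'a \<Rightarrow> 'a \<Rightarrow> real" where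
  "del_edge w e x y = (if {x, y} = e then 0 else w x y)"

lemma wgraph_del_edge: "wgraph V w \<Longrightarrow> wgraph V (del_edge w e)"
  unfolding wgraph_def del_edge_def by (simp add: insert_commute)

lemma edges_del_edge: "edges V (del_edge w e) = edges V w - {e}"
  unfolding edges_def del_edge_def by auto

lemma cycle_list_del_edge_iff:
  "cycle_list V (del_edge w e) vs \<longleftrightarrow> cycle_list V w vs \<and> e \<notin> cycle_edges vs"
  unfolding cycle_list_def cycle_edges_def del_edge_def by auto

lemma rtrancl_del_cycle_edge_ends:
  assumes c: "cycle_list V w vs" and i: "i < length vs"
  defines "e \<equiv> {vs ! i, vs ! ((i + 1) mod length vs)}"
  shows "(vs ! ((i + 1) mod length vs), vs ! i) \<in> (adj_rel V (del_edge w e))\<^sup>*"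
proof -
  let ?p = "length vs" and ?Q = "adj_rel V (del_edge w e)"
  have p: "distinct vs" "3 \<le> ?p" "set vs \<subseteq> V"
    and adj: "\<And>i. i < ?p \<Longrightarrow> w (vs ! i) (vs ! ((i + 1) mod ?p)) \<noteq> 0"
    using c unfolding cycle_list_def by auto
  have "0 < ?p" using p(2) by linarith
  have step: "(vs ! (j mod ?p), vs ! (Suc j mod ?p)) \<in> ?Q" if "i + 1 \<le> j" "j < i + ?p" for j
  proof -
    have jp: "j mod ?p < ?p" "j mod ?p \<noteq> i"
      using mod_ne_if_between[of i ?p j] that i \<open>0 < ?p\<close> by auto
    have "{vs ! (j mod ?p), vs ! ((j mod ?p + 1) mod ?p)} \<noteq> e"
      using cycle_edge_inj[OF p(1,2) jp(1) i] jp(2) unfolding e_def by metis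
    moreover have "Suc j mod ?p = (j mod ?p + 1) mod ?p" by (simp add: mod_Suc_eq)
    moreover have "(j mod ?p + 1) mod ?p < ?p" using \<open>0 < ?p\<close> by simp
    ultimately show ?thesis
      using adj[OF jp(1)] p(3) jp(1) nth_mem by (auto simp: del_edge_def adj_rel_def)
  qed
  have "(vs ! ((i + 1) mod ?p), vs ! ((i + ?p) mod ?p)) \<in> ?Q\<^sup>*"
    by (rule rtrancl_chain[of "i + 1" "i + ?p" "\<lambda>j. vs ! (j mod ?p)"]) (use step p(2) in auto)
  then show ?thesis using i by simp
qed

lemma connected_del_cycle_edge:
  assumes g: "wgraph V w" and conn: "connected_wg V w" and c: "cycle_list V w vs"
    and e: "e \<in> cycle_edges vs"
  shows "connected_wg V (del_edge w e)"
proof -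
  let ?p = "length vs" and ?Q = "adj_rel V (del_edge w e)"
  obtain i where i: "i < ?p" "e = {vs ! i, vs ! ((i + 1) mod ?p)}"
    using e unfolding cycle_edges_def by blast
  have succ_to_i: "(vs ! ((i + 1) mod ?p), vs ! i) \<in> ?Q\<^sup>*"
    using rtrancl_del_cycle_edge_ends[OF c i(1)] i(2) by simp
  then have i_to_succ: "(vs ! i, vs ! ((i + 1) mod ?p)) \<in> ?Q\<^sup>*"
    using sym_rtrancl[OF sym_adj_rel[OF wgraph_del_edge[OF g]]] by (auto dest: symD)
  have "adj_rel V w \<subseteq> ?Q\<^sup>*"
  proof clarify
    fix x y assume xy: "(x, y) \<in> adj_rel V w"
    show "(x, y) \<in> ?Q\<^sup>*"
    proof (cases "{x, y} = e")
      case True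
      then show ?thesis using succ_to_i i_to_succ i(2) by (auto simp: doubleton_eq_iff)
    next
      case False
      then have "(x, y) \<in> ?Q" using xy by (auto simp: adj_rel_def del_edge_def)
      then show ?thesis by (rule r_into_rtrancl)
    qed
  qed
  then show ?thesis using conn unfolding connected_wg_iff by (meson rtrancl_subset_rtrancl subsetD)
qed

section \<open>Counting edges\<close>

lemma connected_parent_map:
  assumes conn: "connected_wg V w" and r: "r \<in> V"
  obtains d :: "'a \<Rightarrow> nat" and pa :: "'a \<Rightarrow> 'a"
  where "\<And>v. v \<in> V - {r} \<Longrightarrow> (pa v, v) \<in> adj_rel V w \<and> d (pa v) < d v"
proof -
  let ?R = "adj_rel V w"
  define d where "d v = (LEAST n. (r, v) \<in> ?R ^^ n)" for v
  have parent: "\<exists>y. (y, v) \<in> ?R \<and> d y < d v" if v: "v \<in> V - {r}" for v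
  proof -
    have "(r, v) \<in> ?R\<^sup>*" using conn r v unfolding connected_wg_iff by blast
    then have "\<exists>n. (r, v) \<in> ?R ^^ n" by (simp add: rtrancl_power)
    then have rv: "(r, v) \<in> ?R ^^ d v" unfolding d_def by (rule LeastI_ex)
    have "d v \<noteq> 0"
    proof
      assume "d v = 0"
      then show False using rv v by simp
    qed
    then obtain k where k: "d v = Suc k" using not0_implies_Suc by blast
    then obtain y where y: "(r, y) \<in> ?R ^^ k" "(y, v) \<in> ?R" using rv by auto
    have "d y \<le> k" unfolding d_def using y(1) by (rule Least_le)
    then show ?thesis using y(2) k by auto
  qed
  define pa where "pa v = (SOME y. (y, v) \<in> ?R \<and> d y < d v)" for v
  have "(pa v, v) \<in> ?R \<and> d (pa v) < d v" if "v \<in> V - {r}" for v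
    unfolding pa_def using someI_ex[OF parent[OF that]] .
  then show ?thesis using that by blast
qed

lemma card_le_card_edges_Suc:
  assumes g: "wgraph V w" and conn: "connected_wg V w"
  shows "card V \<le> card (edges V w) + 1"
proof -
  have finV: "finite V" using wgraph_finite[OF g] .
  obtain r where r: "r \<in> V" using conn unfolding connected_wg_iff by blast
  obtain d :: "'a \<Rightarrow> nat" and pa where pa: "\<And>v. v \<in> V - {r} \<Longrightarrow> (pa v, v) \<in> adj_rel V w \<and> d (pa v) < d v"
    using connected_parent_map[OF conn r] by blast
  let ?f = "\<lambda>v. {pa v, v}"
  have sub: "?f ` (V - {r}) \<subseteq> edges V w"
  proof
    fix e assume "e \<in> ?f ` (V - {r})"
    then obtain v where v: "v \<in> V - {r}" "e = {pa v, v}" by blast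
    then have "pa v \<in> V" "v \<in> V" "w (pa v) v \<noteq> 0" using pa[of v] by (auto simp: adj_rel_def)
    then show "e \<in> edges V w" unfolding v(2) by (rule edgesI)
  qed
  txt \<open>The distance \<open>d\<close> decreases along parent edges, so no edge is the parent edge of
    both of its ends.\<close>
  have inj: "inj_on ?f (V - {r})"
  proof (rule inj_onI)
    fix x y assume x: "x \<in> V - {r}" and y: "y \<in> V - {r}" and "?f x = ?f y"
    then have "x = y \<or> (pa x = y \<and> pa y = x)" by (auto simp: doubleton_eq_iff)
    moreover have "\<not> (pa x = y \<and> pa y = x)" using pa[OF x] pa[OF y] by auto
    ultimately show "x = y" by blast
  qed
  have "card (V - {r}) \<le> card (edges V w)"
    using card_inj_on_le[OF inj sub finite_edges[OF finV]] .
  then show ?thesis using r finV by simp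
qed

definition path_list :: "'a set \<Rightarrow> ('a \<Rightarrow> 'a \<Rightarrow> real) \<Rightarrow> 'a list \<Rightarrow> bool" where
  "path_list V w xs \<longleftrightarrow> distinct xs \<and> set xs \<subseteq> V \<and>
      (\<forall>i. Suc i < length xs \<longrightarrow> w (xs ! i) (xs ! Suc i) \<noteq> 0)"

lemma path_list_Cons:
  assumes g: "wgraph V w" and P: "path_list V w xs" "xs \<noteq> []"
    and z: "z \<in> V" "z \<notin> set xs" "w (hd xs) z \<noteq> 0"
  shows "path_list V w (z # xs)"
  unfolding path_list_def
proof (intro conjI allI impI)
  show "distinct (z # xs)" "set (z # xs) \<subseteq> V" using P z unfolding path_list_def by auto
next
  fix i assume i: "Suc i < length (z # xs)"
  show "w ((z # xs) ! i) ((z # xs) ! Suc i) \<noteq> 0"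
  proof (cases i)
    case 0
    have "hd xs \<in> V" using P unfolding path_list_def by auto
    then have "w z (hd xs) \<noteq> 0" using wgraph_sym[OF g z(1)] z(3) by metis
    then show ?thesis using 0 P(2) by (simp add: hd_conv_nth)
  next
    case (Suc k)
    then show ?thesis using i P(1) unfolding path_list_def by auto
  qed
qed

lemma cycle_list_take:
  assumes P: "path_list V w xs" and j: "2 \<le> j" "j < length xs" and closing: "w (xs ! j) (xs ! 0) \<noteq> 0"
  shows "cycle_list V w (take (Suc j) xs)"
  unfolding cycle_list_def
proof (intro conjI allI impI)
  let ?vs = "take (Suc j) xs"
  have len: "length ?vs = Suc j" using j by simp
  show "3 \<le> length ?vs" using len j by simp
  show "distinct ?vs" using P unfolding path_list_def by simp
  show "set ?vs \<subseteq> V" using P set_take_subset[of "Suc j" xs] unfolding path_list_def by blast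
next
  fix i assume "i < length (take (Suc j) xs)"
  then have i: "i \<le> j" using j by simp
  show "w (take (Suc j) xs ! i) (take (Suc j) xs ! ((i + 1) mod length (take (Suc j) xs))) \<noteq> 0"
  proof (cases "i < j")
    case True
    then show ?thesis using P j unfolding path_list_def by simp
  next
    case False
    then show ?thesis using i j closing by simp
  qed
qed

lemma degree_ge_2_other_neighbour:
  assumes g: "wgraph V w" and "2 \<le> degree V w v"
  obtains z where "z \<in> V" "z \<noteq> v" "z \<noteq> y" "w v z \<noteq> 0"
proof -
  let ?I = "incident_edges V w v"
  have "finite ?I" using finite_incident_edges[OF wgraph_finite[OF g]] .
  moreover have "\<not> card ?I \<le> Suc 0" using assms(2) unfolding degree_def by simp
  ultimately obtain e1 e2 where e: "e1 \<in> ?I" "e2 \<in> ?I" "e1 \<noteq> e2"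
    using card_le_Suc0_iff_eq by blast
  have "e1 \<in> edges V w" "v \<in> e1" "e2 \<in> edges V w" "v \<in> e2"
    using e unfolding incident_edges_def by simp_all
  obtain z1 where z1: "z1 \<in> V" "z1 \<noteq> v" "e1 = {v, z1}" "w v z1 \<noteq> 0"
    by (rule edge_other_endpoint[OF g \<open>e1 \<in> edges V w\<close> \<open>v \<in> e1\<close>])
  obtain z2 where z2: "z2 \<in> V" "z2 \<noteq> v" "e2 = {v, z2}" "w v z2 \<noteq> 0"
    by (rule edge_other_endpoint[OF g \<open>e2 \<in> edges V w\<close> \<open>v \<in> e2\<close>])
  have "z1 \<noteq> z2" using e(3) z1(3) z2(3) by blast
  then show ?thesis using that z1 z2 by metis
qed

lemma ex_cycle_list_if_min_degree_2:
  assumes g: "wgraph V w" and "V \<noteq> {}" and deg: "\<forall>v\<in>V. 2 \<le> degree V w v"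
  shows "\<exists>vs. cycle_list V w vs"
proof -
  let ?path = "\<lambda>xs. path_list V w xs \<and> xs \<noteq> []"
  obtain v where "v \<in> V" using assms(2) by blast
  then have "?path [v]" by (simp add: path_list_def)
  moreover have "length xs < card V + 1" if "?path xs" for xs
  proof -
    have "length xs = card (set xs)" using that unfolding path_list_def by (simp add: distinct_card)
    also have "\<dots> \<le> card V"
      using that card_mono[OF wgraph_finite[OF g]] unfolding path_list_def by blast
    finally show ?thesis by simp
  qed
  ultimately obtain P where P: "path_list V w P" "P \<noteq> []" and longest: "\<And>xs. ?path xs \<Longrightarrow> length xs \<le> length P"
    using ex_has_greatest_nat[of ?path "[v]" length "card V + 1"] by blast
  have "hd P \<in> V" using P unfolding path_list_def by auto
  txt \<open>If \<open>P\<close> is a single vertex, \<open>P ! 1\<close> is an unspecified value and the condition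
    \<open>z \<noteq> P ! 1\<close> is harmless.\<close>
  then obtain z where z: "z \<in> V" "z \<noteq> hd P" "z \<noteq> P ! 1" "w (hd P) z \<noteq> 0"
    using degree_ge_2_other_neighbour[OF g, of "hd P" "P ! 1"] deg by blast
  have "z \<in> set P"
  proof (rule ccontr)
    assume "z \<notin> set P"
    then have "?path (z # P)" using path_list_Cons[OF g _ _ z(1) _ z(4)] P by blast
    then show False using longest[of "z # P"] by simp
  qed
  then obtain j where j: "j < length P" "P ! j = z" by (auto simp: in_set_conv_nth)
  have "j \<noteq> 0" using j(2) z(2) P(2) by (metis hd_conv_nth)
  moreover have "j \<noteq> 1" using j z(3) by auto
  ultimately have "2 \<le> j" by linarith
  moreover have "w (P ! j) (P ! 0) \<noteq> 0"
  proof -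
    have "w z (hd P) \<noteq> 0" using wgraph_sym[OF g \<open>hd P \<in> V\<close> z(1)] z(4) by simp
    then show ?thesis using j(2) P(2) by (simp add: hd_conv_nth)
  qed
  ultimately have "cycle_list V w (take (Suc j) P)" using cycle_list_take[OF P(1)] j(1) by blast
  then show ?thesis by blast
qed

lemma ex_cycle_list_if_card_le_card_edges:
  assumes "wgraph V w" "V \<noteq> {}" "card V \<le> card (edges V w)"
  shows "\<exists>vs. cycle_list V w vs"
  using assms
proof (induction "card V" arbitrary: V rule: less_induct)
  case less
  note g = less.prems(1)
  have finV: "finite V" using wgraph_finite[OF g] .
  show ?case
  proof (cases "\<exists>u\<in>V. degree V w u \<le> 1")
    case True
    then obtain u where u: "u \<in> V" "degree V w u \<le> 1" by blast
    have "card (V - {u}) = card V - 1" using u(1) by (rule card_Diff_singleton)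
    then have card': "card (V - {u}) \<le> card (edges (V - {u}) w)"
      using card_edges_Diff_vertex[OF finV, of u w] u(2) less.prems(3) by linarith
    have "V - {u} \<noteq> {}"
    proof
      assume "V - {u} = {}"
      then have "V = {u}" using u(1) by blast
      then have "edges V w \<noteq> {}" using less.prems(3) by auto
      then obtain e where e: "e \<in> edges V w" by blast
      then have "card e \<le> card V" using card_mono[OF finV edges_subset[OF e]] by simp
      then show False using card_edge[OF g e] \<open>V = {u}\<close> by simp
    qed
    moreover have "card (V - {u}) < card V" using u(1) finV by (meson card_Diff1_less)
    ultimately obtain vs where "cycle_list (V - {u}) w vs"
      using less.hyps[OF _ wgraph_subset[OF g] _ card'] by blast
    then show ?thesis using cycle_list_mono[of "V - {u}" w vs V] by blast
  next
    case False
    then have "\<forall>v\<in>V. 2 \<le> degree V w v" by auto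
    then show ?thesis by (rule ex_cycle_list_if_min_degree_2[OF g less.prems(2)])
  qed
qed

lemma card_edges_eq_if_unicyclic:
  assumes g: "wgraph V w" and conn: "connected_wg V w" and uni: "unicyclic V w"
  shows "card (edges V w) = card V"
proof -
  have finE: "finite (edges V w)" using finite_edges[OF wgraph_finite[OF g]] .
  obtain C where C: "is_cycle V w C" and unique: "\<And>C'. is_cycle V w C' \<Longrightarrow> C' = C"
    using uni unfolding unicyclic_def by blast
  obtain vs where vs: "cycle_list V w vs" "C = cycle_edges vs"
    using C unfolding is_cycle_iff_cycle_list by blast
  obtain e where e: "e \<in> cycle_edges vs" using cycle_edges_nonempty[OF vs(1)] by blast
  then have eE: "e \<in> edges V w" using cycle_edges_subset[OF vs(1)] by blast
  let ?w' = "del_edge w e"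
  have card': "card (edges V ?w') = card (edges V w) - 1"
    unfolding edges_del_edge using eE by (rule card_Diff_singleton)
  have "0 < card (edges V w)" using eE finE card_gt_0_iff by blast
  moreover have "card V \<le> card (edges V ?w') + 1"
    by (rule card_le_card_edges_Suc[OF wgraph_del_edge[OF g] connected_del_cycle_edge[OF g conn vs(1) e]])
  moreover have "\<not> card V \<le> card (edges V ?w')"
  proof
    assume "card V \<le> card (edges V ?w')"
    then obtain vs' where vs': "cycle_list V ?w' vs'"
      using ex_cycle_list_if_card_le_card_edges[OF wgraph_del_edge[OF g]] conn
      unfolding connected_wg_iff by blast
    then have "is_cycle V w (cycle_edges vs')" "e \<notin> cycle_edges vs'"
      unfolding is_cycle_iff_cycle_list cycle_list_del_edge_iff by auto
    then show False using unique e vs(2) by blast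
  qed
  ultimately show ?thesis using card' by linarith
qed

text \<open>If an edge of the first cycle were missing from the second, deleting it and then an edge of
  the second cycle would leave a connected graph with at most \<open>|V| - 2\<close> edges.\<close>

lemma cycle_edges_subset_if_card_edges_le:
  assumes g: "wgraph V w" and conn: "connected_wg V w" and card: "card (edges V w) \<le> card V"
    and c1: "cycle_list V w vs1" and c2: "cycle_list V w vs2"
  shows "cycle_edges vs1 \<subseteq> cycle_edges vs2"
proof
  fix e assume e1: "e \<in> cycle_edges vs1"
  show "e \<in> cycle_edges vs2"
  proof (rule ccontr)
    assume e2: "e \<notin> cycle_edges vs2"
    obtain e' where e': "e' \<in> cycle_edges vs2" using cycle_edges_nonempty[OF c2] by blast
    define w2 where "w2 = del_edge (del_edge w e) e'"
    have "cycle_list V (del_edge w e) vs2" using c2 e2 by (simp add: cycle_list_del_edge_iff)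
    then have "connected_wg V w2"
      unfolding w2_def using connected_del_cycle_edge[OF wgraph_del_edge[OF g]
          connected_del_cycle_edge[OF g conn c1 e1] _ e'] by blast
    then have le: "card V \<le> card (edges V w2) + 1"
      using card_le_card_edges_Suc wgraph_del_edge[OF wgraph_del_edge[OF g]] unfolding w2_def by blast
    have eE: "e \<in> edges V w" and e'E: "e' \<in> edges V w - {e}"
      using e1 e' e2 cycle_edges_subset[OF c1] cycle_edges_subset[OF c2] by auto
    have finE: "finite (edges V w)" using finite_edges[OF wgraph_finite[OF g]] .
    have "card (edges V w - {e}) = card (edges V w) - 1" using eE by (rule card_Diff_singleton)
    moreover have "card (edges V w2) = card (edges V w - {e}) - 1"
      unfolding w2_def edges_del_edge using e'E by (rule card_Diff_singleton)
    moreover have "0 < card (edges V w - {e})" using e'E finE card_gt_0_iff by blast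
    ultimately show False using le card by linarith
  qed
qed

lemma unicyclic_iff_card_edges_eq:
  assumes g: "wgraph V w" and conn: "connected_wg V w"
  shows "unicyclic V w \<longleftrightarrow> card (edges V w) = card V"
proof
  assume "unicyclic V w"
  then show "card (edges V w) = card V" by (rule card_edges_eq_if_unicyclic[OF g conn])
next
  assume card: "card (edges V w) = card V"
  obtain vs where vs: "cycle_list V w vs"
    using ex_cycle_list_if_card_le_card_edges[OF g] conn card unfolding connected_wg_iff by auto
  have "C = cycle_edges vs" if C: "is_cycle V w C" for C
  proof -
    obtain vs' where vs': "cycle_list V w vs'" "C = cycle_edges vs'"
      using C unfolding is_cycle_iff_cycle_list by blast
    show ?thesis
      using cycle_edges_subset_if_card_edges_le[OF g conn] card vs vs' by (simp add: subset_antisym)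
  qed
  moreover have "is_cycle V w (cycle_edges vs)" using vs unfolding is_cycle_iff_cycle_list by blast
  ultimately show "unicyclic V w" unfolding unicyclic_def using conn by blast
qed

section \<open>Reduction to the cycle\<close>

lemma edges_cycle_wt:
  assumes "C \<subseteq> edges V w"
  shows "edges (\<Union>C) (cycle_wt w C) = C"
proof
  show "edges (\<Union>C) (cycle_wt w C) \<subseteq> C"
    unfolding edges_def cycle_wt_def by (auto split: if_splits)
  show "C \<subseteq> edges (\<Union>C) (cycle_wt w C)"
  proof
    fix e assume e: "e \<in> C"
    then obtain a b where ab: "e = {a, b}" "w a b \<noteq> 0" using assms unfolding edges_def by blast
    then have "a \<in> \<Union>C" "b \<in> \<Union>C" "cycle_wt w C a b \<noteq> 0"
      using e unfolding cycle_wt_def by auto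
    then show "e \<in> edges (\<Union>C) (cycle_wt w C)" unfolding ab(1) by (rule edgesI)
  qed
qed

lemma subdiv_det_cycle_wt:
  assumes g: "wgraph V w" and E: "edges V w = C" and V: "\<Union>C = V"
  shows "subdiv_det (\<Union>C) (cycle_wt w C) = subdiv_det V w"
proof -
  have EC: "edges (\<Union>C) (cycle_wt w C) = C" using edges_cycle_wt[of C V w] E by simp
  have sums: "(\<Sum>v\<in>e - {a}. cycle_wt w C a v) = (\<Sum>v\<in>e - {a}. w a v)"
    if e: "e \<in> C" "a \<in> e" for e a
  proof (rule sum.cong[OF refl])
    fix v assume "v \<in> e - {a}"
    moreover have "e \<in> edges V w" using e(1) E by simp
    then obtain b where "b \<in> V" "b \<noteq> a" "e = {a, b}" "w a b \<noteq> 0"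
      using edge_other_endpoint[OF g _ e(2)] by blast
    ultimately have "{a, v} = e" by auto
    then show "cycle_wt w C a v = w a v" using e(1) unfolding cycle_wt_def by simp
  qed
  have "subdiv_wt (\<Union>C) (cycle_wt w C) x y = subdiv_wt V w x y" for x y
    using sums by (cases x; cases y) (simp_all add: EC E)
  then have "subdiv_wt (\<Union>C) (cycle_wt w C) = subdiv_wt V w" by blast
  moreover have "subdiv_verts (\<Union>C) (cycle_wt w C) = subdiv_verts V w"
    unfolding subdiv_verts_def using EC E V by simp
  ultimately show ?thesis by simp
qed

lemma degree_eq_2_if_card_edges_eq:
  assumes g: "wgraph V w" and card: "card (edges V w) = card V"
    and deg: "\<forall>v\<in>V. 2 \<le> degree V w v" and v: "v \<in> V"
  shows "degree V w v = 2"
proof (rule ccontr)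
  assume "degree V w v \<noteq> 2"
  then have "(\<Sum>v\<in>V. 2) < (\<Sum>v\<in>V. degree V w v)"
    using deg v by (intro sum_strict_mono_ex1[OF wgraph_finite[OF g]]) force+
  then show False using sum_degree[OF g] card by simp
qed

lemma incident_edges_subset_cycle_edges:
  assumes g: "wgraph V w" and c: "cycle_list V w vs" and x: "x \<in> set vs" and deg: "degree V w x = 2"
  shows "incident_edges V w x \<subseteq> cycle_edges vs"
proof -
  obtain c1 c2 where cc: "c1 \<in> cycle_edges vs" "c2 \<in> cycle_edges vs" "c1 \<noteq> c2" "x \<in> c1" "x \<in> c2"
    using two_cycle_edges_at[OF c x] .
  then have sub: "{c1, c2} \<subseteq> incident_edges V w x"
    using cycle_edges_subset[OF c] unfolding incident_edges_def by blast
  have "card (incident_edges V w x) = card {c1, c2}" using deg cc(3) unfolding degree_def by simp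
  then have "incident_edges V w x = {c1, c2}"
    using card_subset_eq[OF finite_incident_edges[OF wgraph_finite[OF g]] sub] by simp
  then show ?thesis using cc(1,2) by simp
qed

lemma cycle_spans_if_min_degree_2:
  assumes g: "wgraph V w" and conn: "connected_wg V w" and card: "card (edges V w) = card V"
    and c: "cycle_list V w vs" and deg: "\<forall>v\<in>V. 2 \<le> degree V w v"
  shows "V = set vs" and "edges V w = cycle_edges vs"
proof -
  have sV: "set vs \<subseteq> V" using c unfolding cycle_list_def by blast
  have incident: "incident_edges V w x \<subseteq> cycle_edges vs" if x: "x \<in> set vs" for x
  proof (rule incident_edges_subset_cycle_edges[OF g c x])
    show "degree V w x = 2" using degree_eq_2_if_card_edges_eq[OF g card deg] x sV by blast
  qed
  have "vs \<noteq> []" by (rule cycle_list_nonempty[OF c])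
  then have "hd vs \<in> set vs" by simp
  have "y \<in> set vs" if y: "y \<in> V" for y
  proof -
    have "(hd vs, y) \<in> (adj_rel V w)\<^sup>*"
      using conn y sV \<open>hd vs \<in> set vs\<close> unfolding connected_wg_iff by blast
    then show ?thesis
    proof (induction rule: rtrancl_induct)
      case base
      show ?case using \<open>hd vs \<in> set vs\<close> .
    next
      case (step a b)
      then have "{a, b} \<in> incident_edges V w a"
        unfolding incident_edges_def adj_rel_def by (auto intro: edgesI)
      then have "{a, b} \<in> cycle_edges vs" using incident[OF step.IH] by blast
      then show ?case using Union_cycle_edges[OF \<open>vs \<noteq> []\<close>] by blast
    qed
  qed
  then show V: "V = set vs" using sV by blast
  show "edges V w = cycle_edges vs"
  proof
    show "edges V w \<subseteq> cycle_edges vs"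
    proof
      fix e assume e: "e \<in> edges V w"
      then obtain a b where "e = {a, b}" "a \<in> V" unfolding edges_def by blast
      then have "e \<in> incident_edges V w a" using e unfolding incident_edges_def by blast
      then show "e \<in> cycle_edges vs" using incident \<open>a \<in> V\<close> V by blast
    qed
  qed (rule cycle_edges_subset[OF c])
qed

lemma subdiv_det_nonzero_iff_cycle:
  assumes "wgraph V w" "connected_wg V w" "card (edges V w) = card V" "cycle_list V w vs"
  shows "subdiv_det V w \<noteq> 0 \<longleftrightarrow>
    subdiv_det (\<Union>(cycle_edges vs)) (cycle_wt w (cycle_edges vs)) \<noteq> 0"
  using assms
proof (induction "card V" arbitrary: V rule: less_induct)
  case less
  note g = less.prems(1) and conn = less.prems(2) and card = less.prems(3) and c = less.prems(4)
  have finV: "finite V" using wgraph_finite[OF g] .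
  show ?case
  proof (cases "\<exists>u\<in>V. degree V w u \<le> 1")
    case False
    then have "\<forall>v\<in>V. 2 \<le> degree V w v" by auto
    then have "V = set vs" "edges V w = cycle_edges vs"
      using cycle_spans_if_min_degree_2[OF g conn card c] by auto
    moreover have "vs \<noteq> []" by (rule cycle_list_nonempty[OF c])
    ultimately show ?thesis using subdiv_det_cycle_wt[OF g] Union_cycle_edges by metis
  next
    case True
    then obtain u where u: "u \<in> V" "degree V w u \<le> 1" by blast
    have "u \<notin> set vs" using degree_ge_2_on_cycle[OF g c] u(2) by fastforce
    moreover have "hd vs \<in> set vs" using cycle_list_nonempty[OF c] by simp
    moreover have "set vs \<subseteq> V" using c unfolding cycle_list_def by blast
    ultimately obtain v where v: "v \<in> V" "w u v \<noteq> 0" and leaf: "incident_edges V w u = {{u, v}}"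
      using connected_degree_le_1_leaf[OF g conn u(1) _ _ u(2), of "hd vs"] by blast
    have "card (edges (V - {u}) w) = card (V - {u})"
      using card_edges_Diff_vertex[OF finV, of u w] card_Diff_singleton[OF u(1)] leaf card
      unfolding degree_def by simp
    moreover have "cycle_list (V - {u}) w vs"
      using c \<open>u \<notin> set vs\<close> unfolding cycle_list_def by blast
    moreover have "card (V - {u}) < card V" using u(1) finV by (meson card_Diff1_less)
    ultimately have "subdiv_det (V - {u}) w \<noteq> 0 \<longleftrightarrow>
        subdiv_det (\<Union>(cycle_edges vs)) (cycle_wt w (cycle_edges vs)) \<noteq> 0"
      using less.hyps wgraph_subset[OF g] connected_remove_leaf[OF g conn u(1) v leaf] by blast
    moreover have "subdiv_det V w = - (w u v)\<^sup>2 * subdiv_det (V - {u}) w"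
      by (rule subdiv_det_remove_leaf[OF g u(1) v leaf])
    ultimately show ?thesis using v(2) by simp
  qed
qed

lemma subdiv_nonsingular_iff_cycle:
  assumes "wgraph V w" "connected_wg V w" "card (edges V w) = card V" "is_cycle V w C"
  shows "subdiv_nonsingular V w \<longleftrightarrow> subdiv_nonsingular (\<Union>C) (cycle_wt w C)"
  using subdiv_det_nonzero_iff_cycle[OF assms(1-3)] assms(4)
  unfolding is_cycle_iff_cycle_list subdiv_nonsingular_iff by blast

theorem theorem34:
  fixes V :: "'a set" and w :: "'a \<Rightarrow> 'a \<Rightarrow> real"
  assumes "wgraph V w" and "connected_wg V w"
  shows "subdiv_nonsingular V w \<longleftrightarrow>
    (unicyclic V w \<and> (\<exists>C. is_cycle V w C \<and> subdiv_nonsingular (\<Union>C) (cycle_wt w C)))"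
proof
  assume nonsing: "subdiv_nonsingular V w"
  then have card: "card (edges V w) = card V"
    using subdiv_det_eq_0_if_card_edges_ne[OF assms(1)] unfolding subdiv_nonsingular_iff by blast
  then have uni: "unicyclic V w" using unicyclic_iff_card_edges_eq[OF assms] by blast
  then obtain C where "is_cycle V w C" unfolding unicyclic_def by blast
  then show "unicyclic V w \<and> (\<exists>C. is_cycle V w C \<and> subdiv_nonsingular (\<Union>C) (cycle_wt w C))"
    using uni nonsing subdiv_nonsingular_iff_cycle[OF assms card] by blast
next
  assume "unicyclic V w \<and> (\<exists>C. is_cycle V w C \<and> subdiv_nonsingular (\<Union>C) (cycle_wt w C))"
  then obtain C where uni: "unicyclic V w" and C: "is_cycle V w C"
    and "subdiv_nonsingular (\<Union>C) (cycle_wt w C)" by blast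
  moreover have "card (edges V w) = card V" using uni unicyclic_iff_card_edges_eq[OF assms] by blast
  ultimately show "subdiv_nonsingular V w" using subdiv_nonsingular_iff_cycle[OF assms] by blast
qed

end
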